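(* The half line $\mathbb R_+=[0,\infty)$ (with the standard metric) is an absolute extensor in the category $\mathcal A$ and in the category $\tilde{\mathcal A}$.
   Context: A metric space is proper if all closed balls are compact; a map is proper if preimages of compact sets are compact; a map $f:X\to Y$ of metric spaces is asymptotically Lipschitz if there are $\lambda,s\ge0$ with $d_Y(f(x),f(x'))\le\lambda d_X(x,x')+s$ for all $x,x'$. The category $\mathcal A$ has proper metric spaces as objects and continuous proper asymptotically Lipschitz maps as morphisms. The category $\tilde{\mathcal A}$ has the same objects; its morphisms are morphisms $f:X\to Y$ of $\mathcal A$ with nonzero norm, meaning: for base points $x_0\in X$, $y_0\in Y$ there exist $c>0$, $b\ge0$ with $d_Y(f(x),y_0)\ge c\,d_X(x,x_0)-b$ for all $x\in X$ (this does not depend on the base points). An object $Y$ is an absolute extensor in such a category if for every object $X$, every closed subset $A\subset X$ with the induced metric, and every morphism $\phi:A\to Y$, there is a morphism $\bar\phi:X\to Y$ with $\bar\phi|_A=\phi$. *)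

theory Defs
  imports "HOL-Analysis.Analysis"
begin

definition proper_metric :: "'a metric \<Rightarrow> bool" where
  "proper_metric X \<longleftrightarrow>
     (\<forall>x\<in>mspace X. \<forall>r::real. compactin (mtopology_of X) (mcball_of X x r))"

definition proper_metric_map :: "'a metric \<Rightarrow> 'b metric \<Rightarrow> ('a \<Rightarrow> 'b) \<Rightarrow> bool" where
  "proper_metric_map X Y f \<longleftrightarrow>
     (\<forall>K. compactin (mtopology_of Y) K \<longrightarrow>
          compactin (mtopology_of X) {x \<in> mspace X. f x \<in> K})"

definition asymp_lipschitz :: "'a metric \<Rightarrow> 'b metric \<Rightarrow> ('a \<Rightarrow> 'b) \<Rightarrow> bool" where
  "asymp_lipschitz X Y f \<longleftrightarrow>
     (\<exists>L s. L \<ge> 0 \<and> s \<ge> 0 \<and>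
        (\<forall>x\<in>mspace X. \<forall>x'\<in>mspace X. mdist Y (f x) (f x') \<le> L * mdist X x x' + s))"

definition morA :: "'a metric \<Rightarrow> 'b metric \<Rightarrow> ('a \<Rightarrow> 'b) \<Rightarrow> bool" where
  "morA X Y f \<longleftrightarrow> continuous_map (mtopology_of X) (mtopology_of Y) f
                 \<and> proper_metric_map X Y f \<and> asymp_lipschitz X Y f"

text \<open>Nonzero norm (required for all base points; independent of the choice).\<close>
definition nonzero_norm :: "'a metric \<Rightarrow> 'b metric \<Rightarrow> ('a \<Rightarrow> 'b) \<Rightarrow> bool" where
  "nonzero_norm X Y f \<longleftrightarrow>
     (\<forall>x0\<in>mspace X. \<forall>y0\<in>mspace Y. \<exists>c b. c > 0 \<and> b \<ge> 0 \<and>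
        (\<forall>x\<in>mspace X. mdist Y (f x) y0 \<ge> c * mdist X x x0 - b))"

definition morAt :: "'a metric \<Rightarrow> 'b metric \<Rightarrow> ('a \<Rightarrow> 'b) \<Rightarrow> bool" where
  "morAt X Y f \<longleftrightarrow> morA X Y f \<and> nonzero_norm X Y f"

definition halfline :: "real metric" where
  "halfline = submetric euclidean_metric {0..}"

end

theory Submission
  imports Defs
begin

(* Let \<phi> be nonnegative on the closed set A with |\<phi> a - \<phi> a'| \<le> L d(a,a') + s, where L > 0.
   The infimal convolution h x = inf_a (\<phi> a + L d(x,a)) is an L-Lipschitz function on X with
   \<phi> - s \<le> h \<le> \<phi> on A. Tietze's theorem extends the defect \<phi> - h from A to a continuous
   g : X \<rightarrow> [0,s], and \<psi> = h + g extends \<phi>. As \<psi> stays within s of h, it inherits from h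
   the asymptotic Lipschitz bound, properness (h x \<le> R forces x to lie within (R+1)/L of a
   point of A where \<phi> \<le> R+1, and these points form a bounded set) and any linear lower bound
   c d(x,a0) - b satisfied by \<phi>. For empty A the distance to a base point is a morphism. *)

lemma halfline_simps [simp]:
  "mspace halfline = {0..}" "mdist halfline = dist"
  "mtopology_of halfline = subtopology euclideanreal {0..}"
  by (simp_all add: halfline_def mtopology_of_submetric)

(* For maps from a proper space to the half line, this is properness. *)
definition coercive :: "'a metric \<Rightarrow> ('a \<Rightarrow> real) \<Rightarrow> bool" where
  "coercive X f \<longleftrightarrow> (\<forall>R. \<exists>z r. {x \<in> mspace X. f x \<le> R} \<subseteq> mcball_of X z r)"

lemma coercive_mono:
  assumes "coercive X f" and "\<And>x. x \<in> mspace X \<Longrightarrow> f x \<le> g x"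
  shows "coercive X g"
  unfolding coercive_def
proof
  fix R
  obtain z r where "{x \<in> mspace X. f x \<le> R} \<subseteq> mcball_of X z r"
    using assms(1) unfolding coercive_def by blast
  then have "{x \<in> mspace X. g x \<le> R} \<subseteq> mcball_of X z r"
    using assms(2) by force
  then show "\<exists>z r. {x \<in> mspace X. g x \<le> R} \<subseteq> mcball_of X z r" by blast
qed

lemma compactin_imp_subset_mcball_of:
  assumes "compactin (mtopology_of X) S"
  obtains z r where "S \<subseteq> mcball_of X z r"
proof -
  have "Metric_space.mbounded (mspace X) (mdist X) S"
    using Metric_space.compactin_imp_mbounded[OF Metric_space_mspace_mdist] assms
    by (simp add: mtopology_of_def)
  then show ?thesis
    using that by (auto simp: Metric_space.mbounded_def[OF Metric_space_mspace_mdist] mcball_of_def)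
qed

lemma morA_halfline_D:
  assumes "morA X halfline f"
  shows "continuous_map (mtopology_of X) euclideanreal f"
    and nonneg: "\<And>x. x \<in> mspace X \<Longrightarrow> 0 \<le> f x"
    and "coercive X f"
proof -
  show "continuous_map (mtopology_of X) euclideanreal f"
    and nonneg: "\<And>x. x \<in> mspace X \<Longrightarrow> 0 \<le> f x"
    using assms by (auto simp: morA_def continuous_map_in_subtopology)
  show "coercive X f"
    unfolding coercive_def
  proof
    fix R :: real
    have "compactin (mtopology_of halfline) {0..R}"
      by (simp add: compactin_subtopology)
    then have "compactin (mtopology_of X) {x \<in> mspace X. f x \<in> {0..R}}"
      using assms unfolding morA_def proper_metric_map_def by blast
    then obtain z r where "{x \<in> mspace X. f x \<in> {0..R}} \<subseteq> mcball_of X z r"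
      by (rule compactin_imp_subset_mcball_of)
    then show "\<exists>z r. {x \<in> mspace X. f x \<le> R} \<subseteq> mcball_of X z r"
      using nonneg by fastforce
  qed
qed

lemma morA_halfline_intro:
  assumes "proper_metric X"
    and cont: "continuous_map (mtopology_of X) euclideanreal f"
    and nonneg: "\<And>x. x \<in> mspace X \<Longrightarrow> 0 \<le> f x"
    and lip: "asymp_lipschitz X halfline f" and coer: "coercive X f"
  shows "morA X halfline f"
  unfolding morA_def
proof (intro conjI)
  show "continuous_map (mtopology_of X) (mtopology_of halfline) f"
    using cont nonneg by (auto simp: continuous_map_in_subtopology)
  show "proper_metric_map X halfline f"
    unfolding proper_metric_map_def
  proof (intro allI impI)
    fix K assume "compactin (mtopology_of halfline) K"
    then have "compact K"
      by (simp add: compactin_subtopology)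
    then obtain R where "\<forall>k\<in>K. \<bar>k\<bar> \<le> R"
      using compact_imp_bounded bounded_real by blast
    obtain z r where zr: "{x \<in> mspace X. f x \<le> R} \<subseteq> mcball_of X z r"
      using coer unfolding coercive_def by blast
    have "{x \<in> mspace X. f x \<in> K} \<subseteq> {x \<in> mspace X. f x \<le> R}"
      using \<open>\<forall>k\<in>K. \<bar>k\<bar> \<le> R\<close> by force
    then have preimage_sub: "{x \<in> mspace X. f x \<in> K} \<subseteq> mcball_of X z r"
      using zr by (rule order_trans)
    have preimage_closed: "closedin (mtopology_of X) {x \<in> mspace X. f x \<in> K}"
      using closedin_continuous_map_preimage[OF cont] \<open>compact K\<close>
      by (metis closed_closedin compact_imp_closed topspace_mtopology_of)
    show "compactin (mtopology_of X) {x \<in> mspace X. f x \<in> K}"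
    proof (cases "z \<in> mspace X")
      case True
      then have "compactin (mtopology_of X) (mcball_of X z r)"
        using \<open>proper_metric X\<close> by (simp add: proper_metric_def)
      then show ?thesis
        by (rule closed_compactin[OF _ preimage_sub preimage_closed])
    next
      case False
      then have "{x \<in> mspace X. f x \<in> K} = {}"
        using preimage_sub by auto
      then show ?thesis
        by (metis compactin_empty)
    qed
  qed
qed (fact lip)

lemma nonzero_norm_from_base_point:
  assumes maps: "f ` mspace X \<subseteq> mspace Y"
    and x1: "x1 \<in> mspace X" and y1: "y1 \<in> mspace Y" and "c > 0"
    and bound: "\<And>x. x \<in> mspace X \<Longrightarrow> c * mdist X x x1 - b \<le> mdist Y (f x) y1"
  shows "nonzero_norm X Y f"
  unfolding nonzero_norm_def
proof (intro ballI)
  fix x0 y0 assume x0: "x0 \<in> mspace X" and y0: "y0 \<in> mspace Y"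
  define b' where "b' = max 0 (b + mdist Y y0 y1 + c * mdist X x1 x0)"
  have "c * mdist X x x0 - b' \<le> mdist Y (f x) y0" if x: "x \<in> mspace X" for x
  proof -
    have "c * mdist X x x0 \<le> c * (mdist X x x1 + mdist X x1 x0)"
      using mdist_triangle[OF x x1 x0] \<open>c > 0\<close> by simp
    moreover have "mdist Y (f x) y1 \<le> mdist Y (f x) y0 + mdist Y y0 y1"
      using mdist_triangle[OF _ y0 y1] maps x by blast
    moreover have "b + mdist Y y0 y1 + c * mdist X x1 x0 \<le> b'"
      unfolding b'_def by (rule max.cobounded2)
    ultimately show ?thesis
      using bound[OF x] by (simp add: distrib_left)
  qed
  moreover have "0 \<le> b'"
    unfolding b'_def by (rule max.cobounded1)
  ultimately show "\<exists>c b. c > 0 \<and> b \<ge> 0 \<and> (\<forall>x\<in>mspace X. c * mdist X x x0 - b \<le> mdist Y (f x) y0)"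
    using \<open>c > 0\<close> by blast
qed

definition mcshane :: "'a metric \<Rightarrow> 'a set \<Rightarrow> ('a \<Rightarrow> real) \<Rightarrow> real \<Rightarrow> 'a \<Rightarrow> real" where
  "mcshane X A \<phi> L x = (INF a\<in>A. \<phi> a + L * mdist X x a)"

(* A \<noteq> {} and \<phi> \<ge> 0 make the infimum in mcshane a genuine one: Inf of an empty or
   unbounded set of reals is an unspecified value. *)
locale McShane =
  fixes X :: "'a metric" and A :: "'a set" and \<phi> :: "'a \<Rightarrow> real" and L :: real
  assumes A_sub: "A \<subseteq> mspace X" and A_ne: "A \<noteq> {}"
    and \<phi>_nonneg: "\<And>a. a \<in> A \<Longrightarrow> 0 \<le> \<phi> a" and L_nonneg: "0 \<le> L"
begin

lemma mcshane_le: "a \<in> A \<Longrightarrow> mcshane X A \<phi> L x \<le> \<phi> a + L * mdist X x a"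
  unfolding mcshane_def
proof (rule cInf_lower)
  show "bdd_below ((\<lambda>a. \<phi> a + L * mdist X x a) ` A)"
    using \<phi>_nonneg L_nonneg by (intro bdd_belowI2[of _ 0]) simp
qed simp

lemma mcshane_greatest:
  "(\<And>a. a \<in> A \<Longrightarrow> m \<le> \<phi> a + L * mdist X x a) \<Longrightarrow> m \<le> mcshane X A \<phi> L x"
  unfolding mcshane_def using A_ne by (intro cINF_greatest) auto

lemma mcshane_nonneg: "0 \<le> mcshane X A \<phi> L x"
  using \<phi>_nonneg L_nonneg by (intro mcshane_greatest) simp

lemma mcshane_le_self:
  assumes "a \<in> A"
  shows "mcshane X A \<phi> L a \<le> \<phi> a"
proof -
  have "mdist X a a = 0"
    using assms A_sub by auto
  then show ?thesis
    using mcshane_le[OF assms, of a] by simp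
qed

lemma mcshane_ge_self:
  assumes "\<And>a a'. a \<in> A \<Longrightarrow> a' \<in> A \<Longrightarrow> \<phi> a \<le> \<phi> a' + L * mdist X a a' + s" and "a \<in> A"
  shows "\<phi> a - s \<le> mcshane X A \<phi> L a"
  using assms by (intro mcshane_greatest) fastforce

lemma mcshane_Lipschitz:
  assumes x: "x \<in> mspace X" and y: "y \<in> mspace X"
  shows "\<bar>mcshane X A \<phi> L x - mcshane X A \<phi> L y\<bar> \<le> L * mdist X x y"
proof -
  have one_side: "mcshane X A \<phi> L x \<le> mcshane X A \<phi> L y + L * mdist X x y"
    if x: "x \<in> mspace X" and y: "y \<in> mspace X" for x y
  proof -
    have "mcshane X A \<phi> L x - L * mdist X x y \<le> mcshane X A \<phi> L y"
    proof (rule mcshane_greatest)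
      fix a assume a: "a \<in> A"
      have "a \<in> mspace X"
        using a A_sub by blast
      then have "L * mdist X x a \<le> L * (mdist X x y + mdist X y a)"
        using mult_left_mono[OF mdist_triangle[OF x y] L_nonneg] by blast
      then show "mcshane X A \<phi> L x - L * mdist X x y \<le> \<phi> a + L * mdist X y a"
        using mcshane_le[OF a, of x] by (simp add: distrib_left)
    qed
    then show ?thesis by simp
  qed
  then show ?thesis
    using one_side[OF x y] one_side[OF y x] mdist_commute[of X y x] by (simp add: abs_le_iff)
qed

lemma continuous_map_mcshane:
  "continuous_map (mtopology_of X) euclideanreal (mcshane X A \<phi> L)"
proof -
  have "Lipschitz_continuous_map X euclidean_metric (mcshane X A \<phi> L)"
    unfolding Lipschitz_continuous_map_def
    using mcshane_Lipschitz by (auto simp: dist_real_def intro!: exI[of _ L])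
  then show ?thesis
    using Lipschitz_continuous_imp_continuous_map by fastforce
qed

lemma coercive_mcshane:
  assumes "coercive (submetric X A) \<phi>" and "0 < L"
  shows "coercive X (mcshane X A \<phi> L)"
  unfolding coercive_def
proof
  fix R
  have "\<exists>z r. {a \<in> mspace (submetric X A). \<phi> a \<le> R + 1} \<subseteq> mcball_of (submetric X A) z r"
    using assms(1) unfolding coercive_def by (rule spec)
  then obtain z r where zr: "{a \<in> A \<inter> mspace X. \<phi> a \<le> R + 1} \<subseteq> mcball_of (submetric X A) z r"
    by auto
  have "x \<in> mcball_of X z (r + (R + 1) / L)"
    if x: "x \<in> mspace X" and hx: "mcshane X A \<phi> L x \<le> R" for x
  proof -
    have "\<not> (\<forall>a\<in>A. R + 1 \<le> \<phi> a + L * mdist X x a)"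
    proof
      assume "\<forall>a\<in>A. R + 1 \<le> \<phi> a + L * mdist X x a"
      then have "R + 1 \<le> mcshane X A \<phi> L x"
        by (intro mcshane_greatest) blast
      with hx show False
        by linarith
    qed
    then obtain a where a: "a \<in> A" and close: "\<phi> a + L * mdist X x a < R + 1"
      by (auto simp: not_le)
    have "0 \<le> L * mdist X x a"
      using L_nonneg by simp
    then have "a \<in> {a \<in> A \<inter> mspace X. \<phi> a \<le> R + 1}"
      using close a A_sub by auto
    then have "a \<in> mcball_of (submetric X A) z r"
      by (rule subsetD[OF zr])
    then have z: "z \<in> mspace X" and am: "a \<in> mspace X" and "mdist X z a \<le> r"
      by auto
    moreover have "mdist X x a \<le> (R + 1) / L"
      using close \<phi>_nonneg[OF a] \<open>0 < L\<close> by (simp add: field_simps)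
    moreover have "mdist X z x \<le> mdist X z a + mdist X a x"
      using mdist_triangle[OF z am x] .
    ultimately show ?thesis
      using x by (simp add: mdist_commute)
  qed
  then show "\<exists>z r. {x \<in> mspace X. mcshane X A \<phi> L x \<le> R} \<subseteq> mcball_of X z r"
    by blast
qed

lemma mcshane_lower_bound:
  assumes a0: "a0 \<in> A" and "0 \<le> c"
    and bound: "\<And>a. a \<in> A \<Longrightarrow> c * mdist X a a0 - b \<le> \<phi> a"
    and x: "x \<in> mspace X"
  shows "min c L * mdist X x a0 - b \<le> mcshane X A \<phi> L x"
proof (rule mcshane_greatest)
  fix a assume a: "a \<in> A"
  have "a \<in> mspace X" "a0 \<in> mspace X"
    using a a0 A_sub by blast+
  then have "min c L * mdist X x a0 \<le> min c L * (mdist X x a + mdist X a a0)"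
    using mult_left_mono[OF mdist_triangle[OF x], of a a0 "min c L"] \<open>0 \<le> c\<close> L_nonneg
    by simp
  also have "\<dots> \<le> L * mdist X x a + c * mdist X a a0"
    by (simp add: distrib_left add_mono mult_right_mono)
  finally show "min c L * mdist X x a0 - b \<le> \<phi> a + L * mdist X x a"
    using bound[OF a] by simp
qed

lemma nonzero_norm_above_mcshane:
  assumes "0 < L" and \<phi>: "nonzero_norm (submetric X A) halfline \<phi>"
    and above: "\<And>x. x \<in> mspace X \<Longrightarrow> mcshane X A \<phi> L x \<le> \<psi> x"
  shows "nonzero_norm X halfline \<psi>"
proof -
  have \<psi>_nonneg: "0 \<le> \<psi> x" if "x \<in> mspace X" for x
    using mcshane_nonneg[of x] above[OF that] by linarith
  obtain a0 where a0: "a0 \<in> A"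
    using A_ne by blast
  then have "a0 \<in> mspace (submetric X A)"
    using A_sub by auto
  then have "\<exists>c>0. \<exists>b. \<forall>a\<in>A \<inter> mspace X. c * mdist X a a0 - b \<le> \<bar>\<phi> a\<bar>"
    using bspec[OF bspec[OF \<phi>[unfolded nonzero_norm_def]], of _ 0] by simp blast
  then obtain c b where "0 < c"
    and bound: "\<forall>a\<in>A \<inter> mspace X. c * mdist X a a0 - b \<le> \<bar>\<phi> a\<bar>"
    by blast
  have \<phi>_bound: "c * mdist X a a0 - b \<le> \<phi> a" if "a \<in> A" for a
  proof -
    have "a \<in> A \<inter> mspace X"
      using that A_sub by blast
    with bound have "c * mdist X a a0 - b \<le> \<bar>\<phi> a\<bar>"
      by blast
    then show ?thesis
      using \<phi>_nonneg[OF that] by linarith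
  qed
  have "min c L * mdist X x a0 - b \<le> \<psi> x" if "x \<in> mspace X" for x
    using mcshane_lower_bound[OF a0 less_imp_le[OF \<open>0 < c\<close>] \<phi>_bound that] above[OF that]
    by linarith
  moreover have "\<psi> ` mspace X \<subseteq> mspace halfline"
    using \<psi>_nonneg by auto
  ultimately show ?thesis
    using a0 A_sub \<psi>_nonneg \<open>0 < c\<close> \<open>0 < L\<close>
    by (intro nonzero_norm_from_base_point[of \<psi> X halfline a0 0 "min c L" b]) auto
qed


lemma morA_halfline_near_mcshane:
  assumes "proper_metric X" "0 < L" "0 \<le> s" "coercive (submetric X A) \<phi>"
    and cont: "continuous_map (mtopology_of X) euclideanreal \<psi>"
    and near: "\<And>x. x \<in> mspace X \<Longrightarrow> mcshane X A \<phi> L x \<le> \<psi> x \<and> \<psi> x \<le> mcshane X A \<phi> L x + s"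
  shows "morA X halfline \<psi>"
proof (rule morA_halfline_intro[OF assms(1) cont])
  show "0 \<le> \<psi> x" if "x \<in> mspace X" for x
    using mcshane_nonneg[of x] near[OF that] by linarith
  have "\<bar>\<psi> x - \<psi> y\<bar> \<le> L * mdist X x y + s" if "x \<in> mspace X" "y \<in> mspace X" for x y
    using mcshane_Lipschitz[OF that] near[OF that(1)] near[OF that(2)] by (simp add: abs_le_iff)
  then show "asymp_lipschitz X halfline \<psi>"
    unfolding asymp_lipschitz_def using \<open>0 < L\<close> \<open>0 \<le> s\<close>
    by (intro exI[of _ L] exI[of _ s]) (simp add: dist_real_def)
  show "coercive X \<psi>"
    by (rule coercive_mono[OF coercive_mcshane[OF assms(4,2)]]) (use near in blast)
qed

end

lemma Tietze_extension_above_minorant: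
  assumes T: "normal_space T" "closedin T A"
    and \<phi>: "continuous_map (subtopology T A) euclideanreal \<phi>"
    and h: "continuous_map T euclideanreal h"
    and near: "\<And>a. a \<in> A \<Longrightarrow> h a \<le> \<phi> a \<and> \<phi> a \<le> h a + s" and "0 \<le> s"
  obtains \<psi> where "continuous_map T euclideanreal \<psi>" "\<And>a. a \<in> A \<Longrightarrow> \<psi> a = \<phi> a"
    "\<And>x. x \<in> topspace T \<Longrightarrow> h x \<le> \<psi> x \<and> \<psi> x \<le> h x + s"
proof -
  have defect_cont: "continuous_map (subtopology T A) euclideanreal (\<lambda>a. \<phi> a - h a)"
    using \<phi> continuous_map_from_subtopology[OF h] by (intro continuous_map_diff)
  have defect_range: "(\<lambda>a. \<phi> a - h a) ` A \<subseteq> {0..s}"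
    using near by force
  obtain g where g: "continuous_map T euclideanreal g"
    and g_on_A: "\<And>a. a \<in> A \<Longrightarrow> g a = \<phi> a - h a" and g_range: "g ` topspace T \<subseteq> {0..s}"
    using Tietze_extension_closed_real_interval[OF T defect_cont defect_range \<open>0 \<le> s\<close>] by blast
  show ?thesis
  proof (rule that[of "\<lambda>x. h x + g x"])
    show "continuous_map T euclideanreal (\<lambda>x. h x + g x)"
      using h g by (rule continuous_map_add)
    show "h a + g a = \<phi> a" if "a \<in> A" for a
      using g_on_A[OF that] by simp
    show "h x \<le> h x + g x \<and> h x + g x \<le> h x + s" if "x \<in> topspace T" for x
      using g_range that by auto
  qed
qed

lemma halfline_extension:
  assumes X: "proper_metric X" and A: "closedin (mtopology_of X) A" "A \<noteq> {}"
    and \<phi>: "morA (submetric X A) halfline \<phi>"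
  obtains \<psi> where "morA X halfline \<psi>" "\<And>a. a \<in> A \<Longrightarrow> \<psi> a = \<phi> a"
    "nonzero_norm (submetric X A) halfline \<phi> \<Longrightarrow> nonzero_norm X halfline \<psi>"
proof -
  have A_sub: "A \<subseteq> mspace X"
    using closedin_subset[OF A(1)] by simp
  note \<phi>_props = morA_halfline_D[OF \<phi>, unfolded mtopology_of_submetric]
  have \<phi>_nonneg: "0 \<le> \<phi> a" if "a \<in> A" for a
    using \<phi>_props(2) that A_sub by auto
  have "\<exists>L0 s. 0 \<le> L0 \<and> 0 \<le> s \<and>
          (\<forall>a\<in>A. \<forall>a'\<in>A. \<bar>\<phi> a - \<phi> a'\<bar> \<le> L0 * mdist X a a' + s)"
    using \<phi> A_sub by (simp add: morA_def asymp_lipschitz_def dist_real_def Int_absorb2)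
  then obtain L0 s where "0 \<le> s"
    and \<phi>_lip: "\<And>a a'. a \<in> A \<Longrightarrow> a' \<in> A \<Longrightarrow> \<bar>\<phi> a - \<phi> a'\<bar> \<le> L0 * mdist X a a' + s"
    by blast
  define L where "L = max 1 L0"
  have "0 < L"
    unfolding L_def by simp
  interpret McShane X A \<phi> L
    using A_sub A(2) \<phi>_nonneg \<open>0 < L\<close> by unfold_locales auto
  have \<phi>_lip_L: "\<phi> a \<le> \<phi> a' + L * mdist X a a' + s" if "a \<in> A" "a' \<in> A" for a a'
  proof -
    have "L0 * mdist X a a' \<le> L * mdist X a a'"
      unfolding L_def by (intro mult_right_mono) auto
    then show ?thesis
      using \<phi>_lip[OF that] by linarith
  qed
  have near: "mcshane X A \<phi> L a \<le> \<phi> a \<and> \<phi> a \<le> mcshane X A \<phi> L a + s" if "a \<in> A" for a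
    using mcshane_le_self[OF that] mcshane_ge_self[OF \<phi>_lip_L that] by linarith
  have normal: "normal_space (mtopology_of X)"
    using Metric_space.normal_space_mtopology[OF Metric_space_mspace_mdist]
    by (simp add: mtopology_of_def)
  obtain \<psi> where \<psi>_cont: "continuous_map (mtopology_of X) euclideanreal \<psi>"
    and \<psi>_on_A: "\<And>a. a \<in> A \<Longrightarrow> \<psi> a = \<phi> a"
    and \<psi>_near: "\<And>x. x \<in> mspace X \<Longrightarrow> mcshane X A \<phi> L x \<le> \<psi> x \<and> \<psi> x \<le> mcshane X A \<phi> L x + s"
    using Tietze_extension_above_minorant[OF normal A(1) \<phi>_props(1) continuous_map_mcshane
        near \<open>0 \<le> s\<close>, unfolded topspace_mtopology_of] by blast
  show ?thesis
  proof (rule that)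
    show "morA X halfline \<psi>"
      by (rule morA_halfline_near_mcshane[OF X \<open>0 < L\<close> \<open>0 \<le> s\<close> \<phi>_props(3) \<psi>_cont \<psi>_near])
    show "nonzero_norm X halfline \<psi>" if "nonzero_norm (submetric X A) halfline \<phi>"
      by (rule nonzero_norm_above_mcshane[OF \<open>0 < L\<close> that]) (use \<psi>_near in blast)
  qed (fact \<psi>_on_A)
qed

lemma morAt_halfline_exists:
  assumes X: "proper_metric X"
  obtains \<psi> where "morAt X halfline \<psi>"
proof (cases "mspace X = {}")
  case True
  have "morA X halfline (\<lambda>x. 0)"
    by (rule morA_halfline_intro[OF X]) (auto simp: True asymp_lipschitz_def coercive_def)
  moreover have "nonzero_norm X halfline (\<lambda>x. 0)"
    by (simp add: True nonzero_norm_def)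
  ultimately show ?thesis
    using that morAt_def by blast
next
  case False
  then obtain x0 where x0: "x0 \<in> mspace X"
    by blast
  have dist_x0: "\<bar>mdist X x0 x - mdist X x0 y\<bar> \<le> mdist X x y"
    if "x \<in> mspace X" "y \<in> mspace X" for x y
    using mdist_triangle[OF x0 that(1,2)] mdist_triangle[OF x0 that(2,1)] mdist_commute[of X x y]
    by (simp add: abs_le_iff)
  have "morA X halfline (mdist X x0)"
  proof (rule morA_halfline_intro[OF X])
    show "continuous_map (mtopology_of X) euclideanreal (mdist X x0)"
      using x0 by (rule continuous_on_mdist)
    show "asymp_lipschitz X halfline (mdist X x0)"
      unfolding asymp_lipschitz_def using dist_x0
      by (intro exI[of _ 1] exI[of _ 0]) (simp add: dist_real_def)
    have "{x \<in> mspace X. mdist X x0 x \<le> R} \<subseteq> mcball_of X x0 R" for R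
      using x0 by auto
    then show "coercive X (mdist X x0)"
      unfolding coercive_def by blast
  qed simp
  moreover have "nonzero_norm X halfline (mdist X x0)"
    using x0 by (intro nonzero_norm_from_base_point[of _ X halfline x0 0 1 0])
      (auto simp: mdist_commute)
  ultimately show ?thesis
    using that morAt_def by blast
qed

theorem theorem4p1:
  fixes X :: "'a metric" and A :: "'a set" and \<phi> :: "'a \<Rightarrow> real"
  assumes "proper_metric X"
    and "closedin (mtopology_of X) A"
  shows "(morA (submetric X A) halfline \<phi> \<longrightarrow>
            (\<exists>\<psi>. morA X halfline \<psi> \<and> (\<forall>a\<in>A. \<psi> a = \<phi> a)))
       \<and> (morAt (submetric X A) halfline \<phi> \<longrightarrow>
            (\<exists>\<psi>. morAt X halfline \<psi> \<and> (\<forall>a\<in>A. \<psi> a = \<phi> a)))"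
proof (cases "A = {}")
  case True
  obtain \<psi> where "morAt X halfline \<psi>"
    using morAt_halfline_exists[OF assms(1)] .
  then show ?thesis
    using True morAt_def by blast
next
  case False
  show ?thesis
  proof (intro conjI impI)
    assume \<phi>: "morA (submetric X A) halfline \<phi>"
    obtain \<psi> where "morA X halfline \<psi>" "\<And>a. a \<in> A \<Longrightarrow> \<psi> a = \<phi> a"
      using halfline_extension[OF assms False \<phi>] by blast
    then show "\<exists>\<psi>. morA X halfline \<psi> \<and> (\<forall>a\<in>A. \<psi> a = \<phi> a)"
      by blast
  next
    assume "morAt (submetric X A) halfline \<phi>"
    then have \<phi>: "morA (submetric X A) halfline \<phi>" and "nonzero_norm (submetric X A) halfline \<phi>"
      by (simp_all add: morAt_def)
    then obtain \<psi> where "morA X halfline \<psi>" "nonzero_norm X halfline \<psi>"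
      and "\<And>a. a \<in> A \<Longrightarrow> \<psi> a = \<phi> a"
      using halfline_extension[OF assms False \<phi>] by blast
    then show "\<exists>\<psi>. morAt X halfline \<psi> \<and> (\<forall>a\<in>A. \<psi> a = \<phi> a)"
      by (auto simp: morAt_def)
  qed
qed

end
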